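(* Let $(Y_j)_{j\in\mathbb Z}$ be a process such that, for all integers $s<t$ and all $\tau>0$, the law of $\tau^{-1}\mathbb X_n^{r_n+s,r_n+t}$ conditioned on $\|\mathbf X_{r_n}\|>u_n(\tau)$ converges to the law of $(Y_j)_{s\le j<t}$. Then $\|Y_0\|$ is uniformly distributed on $[0,1]$.
   Context: $\mathbf X_0,\mathbf X_1,\dots$ is a stationary sequence in $\mathbb R^d$. Thresholds $u_n:(0,\infty)\to(0,\infty)$ nonincreasing, left-continuous, with $\lim_{\tau_1\to0,\tau_2\to\infty}\mathbb P(u_n(\tau_2)<\|\mathbf X_0\|<u_n(\tau_1))=1$ and $\lim_nn\mathbb P(\|\mathbf X_0\|>u_n(\tau))=\tau$ for all $\tau>0$; $u_n^{-1}(z)=\sup\{\tau>0:z\le u_n(\tau)\}$. $r_n\to\infty$ is an integer sequence. $\mathbb X_n^{i,j}=(u_n^{-1}(\|\mathbf X_m\|)\mathbf X_m/\|\mathbf X_m\|)_{m=i}^{j-1}$. *)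

theory Defs
  imports "HOL-Probability.Probability"
begin

definition uinv :: "(real \<Rightarrow> real) \<Rightarrow> real \<Rightarrow> real" where
  "uinv v z = Sup {\<tau>. \<tau> > 0 \<and> z \<le> v \<tau>}"

definition tX :: "(nat \<Rightarrow> real \<Rightarrow> real) \<Rightarrow> (nat \<Rightarrow> 'b \<Rightarrow> real^'d) \<Rightarrow> nat \<Rightarrow> int \<Rightarrow> 'b \<Rightarrow> real^'d" where
  "tX u X n m \<omega> = (uinv (u n) (norm (X (nat m) \<omega>)) / norm (X (nat m) \<omega>)) *\<^sub>R X (nat m) \<omega>"

text \<open>The block X_n^{i,j} = (tX_m)_{m=i}^{j-1}, as a function of the absolute time index m,
  set to 0 outside {i..<j}.\<close>
definition Xblock :: "(nat \<Rightarrow> real \<Rightarrow> real) \<Rightarrow> (nat \<Rightarrow> 'b \<Rightarrow> real^'d) \<Rightarrow> nat \<Rightarrow> int \<Rightarrow> int \<Rightarrow> 'b \<Rightarrow> int \<Rightarrow> real^'d" where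
  "Xblock u X n i j \<omega> = (\<lambda>m. if i \<le> m \<and> m < j then tX u X n m \<omega> else 0)"

definition stationary :: "'b measure \<Rightarrow> (nat \<Rightarrow> 'b \<Rightarrow> real^'d) \<Rightarrow> bool" where
  "stationary M X \<longleftrightarrow> (\<forall>k. distr M (PiM UNIV (\<lambda>_. borel)) (\<lambda>\<omega> i. X (i + k) \<omega>)
                              = distr M (PiM UNIV (\<lambda>_. borel)) (\<lambda>\<omega> i. X i \<omega>))"

definition conv_in_law :: "(nat \<Rightarrow> 'a::topological_space measure) \<Rightarrow> 'a measure \<Rightarrow> bool" where
  "conv_in_law \<mu> \<nu> \<longleftrightarrow> (\<forall>f :: 'a \<Rightarrow> real. continuous_on UNIV f \<and> bounded (range f) \<longrightarrow>
      (\<lambda>n. \<integral>x. f x \<partial>\<mu> n) \<longlonglongrightarrow> (\<integral>x. f x \<partial>\<nu>))"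

end

(*
  On the exceedance event |X_{r_n}| > u_n(1), the generalised inverse is a Galois inverse of the
  threshold: for 0 < y, u_n^{-1}(|X_{r_n}|) >= y iff |X_{r_n}| <= u_n(y), except on an event
  contained in {|X_{r_n}| > u_n(delta)} for arbitrarily small delta.  By stationarity and the tail
  condition, P(|X_{r_n}| > u_n(y)) / P(|X_{r_n}| > u_n(1)) tends to y, so the conditional law of
  u_n^{-1}(|X_{r_n}|) given the exceedance converges to the uniform law on [0,1].  Composing the
  assumed convergence of the blocks (with s = 0, t = 1, tau = 1) with the continuous map
  g |-> |g(0)| shows that the same conditional laws converge to the law of |Y_0|, and limits in law
  of real distributions are unique.
*)

theory Submission
  imports Defs
begin

lemma borel_measurable_uinv:
  fixes v :: "real \<Rightarrow> real"
  assumes anti: "\<And>t1 t2. 0 < t1 \<Longrightarrow> t1 \<le> t2 \<Longrightarrow> v t2 \<le> v t1"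
  shows "uinv v \<in> borel_measurable borel"
proof -
  define S where "S z = {\<tau>. 0 < \<tau> \<and> z \<le> v \<tau>}" for z
  define Full where "Full = {z. \<forall>\<tau>>0. z \<le> v \<tau>}"
  define Empty where "Empty = {z. \<forall>\<tau>>0. v \<tau> < z}"
  have "is_interval Full" unfolding is_interval_1 Full_def by (blast intro: order_trans)
  moreover have "is_interval Empty" unfolding is_interval_1 Empty_def by (blast intro: less_le_trans)
  ultimately have Full_borel: "Full \<in> sets borel" and Empty_borel: "Empty \<in> sets borel"
    by (simp_all add: real_interval_borel_measurable)
  have uinv_S: "uinv v z = Sup (S z)" for z by (simp add: uinv_def S_def)
  have "S z = {\<tau>. 0 < \<tau>}" if "z \<in> Full" for z using that by (auto simp: S_def Full_def)
  moreover have "S z = {}" if "z \<in> Empty" for z using that by (force simp: S_def Empty_def)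
  ultimately have "mono_on Full (\<lambda>z. - uinv v z)" "mono_on Empty (\<lambda>z. - uinv v z)"
    by (auto intro!: mono_onI simp: uinv_S)
  moreover have "mono_on (- (Full \<union> Empty)) (\<lambda>z. - uinv v z)"
  proof (rule mono_onI)
    fix z1 z2 assume z: "z1 \<in> - (Full \<union> Empty)" "z2 \<in> - (Full \<union> Empty)" "z1 \<le> z2"
    then obtain \<tau>0 where \<tau>0: "0 < \<tau>0" "v \<tau>0 < z1" by (auto simp: Full_def not_le)
    have "bdd_above (S z1)"
    proof (rule bdd_aboveI)
      fix \<tau> assume "\<tau> \<in> S z1"
      then show "\<tau> \<le> \<tau>0" using anti[of \<tau>0 \<tau>] \<tau>0 by (force simp: S_def)
    qed
    moreover have "S z2 \<noteq> {}" using z(2) by (force simp: Empty_def S_def not_less)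
    moreover have "S z2 \<subseteq> S z1" using z(3) by (auto simp: S_def)
    ultimately show "- uinv v z1 \<le> - uinv v z2"
      unfolding uinv_S by (simp add: cSup_subset_mono)
  qed
  ultimately have "(\<lambda>z. - uinv v z) \<in> borel_measurable borel"
    by (intro borel_measurable_piecewise_mono[of "{Full, Empty, - (Full \<union> Empty)}"])
       (auto simp: Full_borel Empty_borel intro!: sets.Int borel_comp)
  then show ?thesis by simp
qed

lemma le_uinv_iff:
  fixes v :: "real \<Rightarrow> real"
  assumes anti: "\<And>t1 t2. 0 < t1 \<Longrightarrow> t1 \<le> t2 \<Longrightarrow> v t2 \<le> v t1"
    and left_cont: "\<And>\<tau>. 0 < \<tau> \<Longrightarrow> continuous (at_left \<tau>) v"
    and \<tau>0: "0 < \<tau>0" "z \<le> v \<tau>0" and \<tau>1: "0 < \<tau>1" "v \<tau>1 < z" and "0 < y"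
  shows "y \<le> uinv v z \<longleftrightarrow> z \<le> v y"
proof -
  define S where "S = {\<tau>. 0 < \<tau> \<and> z \<le> v \<tau>}"
  have S_ne: "S \<noteq> {}" using \<tau>0 by (auto simp: S_def)
  have S_bdd: "bdd_above S"
  proof (rule bdd_aboveI)
    fix \<tau> assume "\<tau> \<in> S"
    then show "\<tau> \<le> \<tau>1" using anti[of \<tau>1 \<tau>] \<tau>1 by (force simp: S_def)
  qed
  define a where "a = Sup S"
  have "\<tau>0 \<le> a" using \<tau>0 S_bdd unfolding a_def by (auto intro: cSup_upper simp: S_def)
  with \<tau>0 have a_pos: "0 < a" by linarith
  \<comment> \<open>left continuity makes the supremum attained\<close>
  have "z \<le> v a"
  proof (rule tendsto_lowerbound)
    show "(v \<longlongrightarrow> v a) (at_left a)" using left_cont[OF a_pos] by (simp add: continuous_within)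
    show "\<forall>\<^sub>F t in at_left a. z \<le> v t"
      using eventually_at_left_real[OF a_pos]
    proof eventually_elim
      case (elim t)
      then obtain s where "s \<in> S" "t < s" using less_cSup_iff[OF S_ne S_bdd] by (auto simp: a_def)
      then show "z \<le> v t" using anti[of t s] elim by (auto simp: S_def)
    qed
  qed simp
  show ?thesis
  proof
    assume "y \<le> uinv v z"
    then show "z \<le> v y" using \<open>z \<le> v a\<close> anti[of y a] \<open>0 < y\<close> by (simp add: uinv_def a_def S_def)
  next
    assume "z \<le> v y"
    then show "y \<le> uinv v z" using \<open>0 < y\<close> S_bdd by (auto intro: cSup_upper simp: uinv_def S_def)
  qed
qed

lemma measure_uinv_le_bounds:
  fixes Z :: "'a \<Rightarrow> real" and v :: "real \<Rightarrow> real"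
  assumes "prob_space M" and [measurable]: "Z \<in> borel_measurable M"
    and anti: "\<And>t1 t2. 0 < t1 \<Longrightarrow> t1 \<le> t2 \<Longrightarrow> v t2 \<le> v t1"
    and left_cont: "\<And>\<tau>. 0 < \<tau> \<Longrightarrow> continuous (at_left \<tau>) v"
    and "0 < \<delta>"
  defines "A \<equiv> \<lambda>y. {\<omega> \<in> space M. v y < Z \<omega>}"
    and "F \<equiv> \<lambda>x. {\<omega> \<in> space M. v 1 < Z \<omega> \<and> \<bar>uinv v (Z \<omega>)\<bar> \<le> x}"
  shows measure_uinv_le_lower:
      "0 < b \<Longrightarrow> b \<le> 1 \<Longrightarrow> b \<le> x \<Longrightarrow> measure M (A b) \<le> measure M (F x) + measure M (A \<delta>)"
    and measure_uinv_le_upper: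
      "0 < x' \<Longrightarrow> x < x' \<Longrightarrow> measure M (F x) \<le> measure M (A x') + measure M (A \<delta>)"
proof -
  interpret prob_space M by fact
  note [measurable] = borel_measurable_uinv[OF anti]
  have A_sets [measurable]: "A y \<in> sets M" for y unfolding A_def by measurable
  have F_sets [measurable]: "F x \<in> sets M" for x unfolding F_def by measurable
  \<comment> \<open>Off A \<delta> the set defining uinv v (Z \<omega>) is nonempty and bounded; on A \<delta> nothing is
      known about uinv, since the supremum of an empty set of reals is unspecified.\<close>
  have galois: "y \<le> \<bar>uinv v (Z \<omega>)\<bar> \<longleftrightarrow> Z \<omega> \<le> v y"
    if "\<omega> \<in> A 1" "\<omega> \<notin> A \<delta>" "0 < y" for \<omega> y
  proof -
    have "Z \<omega> \<le> v \<delta>" "v 1 < Z \<omega>" using that by (auto simp: A_def)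
    have iff: "y' \<le> uinv v (Z \<omega>) \<longleftrightarrow> Z \<omega> \<le> v y'" if "0 < y'" for y'
      using anti left_cont \<open>0 < \<delta>\<close> \<open>Z \<omega> \<le> v \<delta>\<close> zero_less_one \<open>v 1 < Z \<omega>\<close> that
      by (rule le_uinv_iff)
    moreover from iff[OF \<open>0 < \<delta>\<close>] have "0 \<le> uinv v (Z \<omega>)"
      using \<open>0 < \<delta>\<close> \<open>Z \<omega> \<le> v \<delta>\<close> by linarith
    ultimately show ?thesis using \<open>0 < y\<close> by simp
  qed
  show "measure M (A b) \<le> measure M (F x) + measure M (A \<delta>)"
    if "0 < b" "b \<le> 1" "b \<le> x"
  proof -
    have "A b \<subseteq> A 1" using anti[of b 1] that by (auto simp: A_def)
    then have "A b \<subseteq> F x \<union> A \<delta>" using galois[of _ b] that by (force simp: F_def A_def)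
    then have "measure M (A b) \<le> measure M (F x \<union> A \<delta>)" by (intro finite_measure_mono) auto
    also have "\<dots> \<le> measure M (F x) + measure M (A \<delta>)" by (intro measure_subadditive) auto
    finally show ?thesis .
  qed
  show "measure M (F x) \<le> measure M (A x') + measure M (A \<delta>)"
    if "0 < x'" "x < x'"
  proof -
    have "F x \<subseteq> A x' \<union> A \<delta>" using galois[of _ x'] that by (force simp: F_def A_def)
    then have "measure M (F x) \<le> measure M (A x' \<union> A \<delta>)" by (intro finite_measure_mono) auto
    also have "\<dots> \<le> measure M (A x') + measure M (A \<delta>)" by (intro measure_subadditive) auto
    finally show ?thesis .
  qed
qed

lemma tendsto_divide_self_imp_eventually_nonzero:
  fixes f :: "'a \<Rightarrow> real"
  assumes "((\<lambda>n. f n / f n) \<longlongrightarrow> 1) F"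
  shows "\<forall>\<^sub>F n in F. f n \<noteq> 0"
  using order_tendstoD(1)[OF assms zero_less_one] by eventually_elim auto

lemma tendsto_measure_uinv_le:
  fixes Z :: "nat \<Rightarrow> 'a \<Rightarrow> real" and v :: "nat \<Rightarrow> real \<Rightarrow> real"
  assumes M: "prob_space M" and Z: "\<And>n. Z n \<in> borel_measurable M"
    and anti: "\<And>n t1 t2. 0 < t1 \<Longrightarrow> t1 \<le> t2 \<Longrightarrow> v n t2 \<le> v n t1"
    and left_cont: "\<And>n \<tau>. 0 < \<tau> \<Longrightarrow> continuous (at_left \<tau>) (v n)"
    and ratio: "\<And>y. 0 < y \<Longrightarrow> (\<lambda>n. measure M {\<omega> \<in> space M. v n y < Z n \<omega>}
                                   / measure M {\<omega> \<in> space M. v n 1 < Z n \<omega>}) \<longlonglongrightarrow> y"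
  shows "(\<lambda>n. measure M {\<omega> \<in> space M. v n 1 < Z n \<omega> \<and> \<bar>uinv (v n) (Z n \<omega>)\<bar> \<le> x}
              / measure M {\<omega> \<in> space M. v n 1 < Z n \<omega>}) \<longlonglongrightarrow> max 0 (min x 1)"
proof -
  interpret prob_space M by fact
  note [measurable] = Z borel_measurable_uinv[OF anti]
  define p where "p n y = measure M {\<omega> \<in> space M. v n y < Z n \<omega>}" for n y
  define c where "c n = measure M {\<omega> \<in> space M. v n 1 < Z n \<omega> \<and> \<bar>uinv (v n) (Z n \<omega>)\<bar> \<le> x} / p n 1" for n
  have p_pos: "\<forall>\<^sub>F n in sequentially. 0 < p n 1"
    using tendsto_divide_self_imp_eventually_nonzero[OF ratio[OF zero_less_one]]
    by eventually_elim (simp add: p_def less_le)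
  have lower: "p n b / p n 1 - p n \<delta> / p n 1 \<le> c n"
    if "0 < p n 1" "0 < b" "b \<le> 1" "b \<le> x" "0 < \<delta>" for n b \<delta>
    using measure_uinv_le_lower[where Z="Z n" and v="v n", OF M Z anti left_cont \<open>0 < \<delta>\<close> that(2-4)] \<open>0 < p n 1\<close>
    by (simp add: c_def p_def diff_divide_distrib[symmetric] divide_right_mono)
  have upper: "c n \<le> p n x' / p n 1 + p n \<delta> / p n 1"
    if "0 < p n 1" "0 < x'" "x < x'" "0 < \<delta>" for n x' \<delta>
    using measure_uinv_le_upper[where Z="Z n" and v="v n", OF M Z anti left_cont \<open>0 < \<delta>\<close> that(2-3)] \<open>0 < p n 1\<close>
    by (simp add: c_def p_def add_divide_distrib[symmetric] divide_right_mono)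
  have ratio': "(\<lambda>n. p n y / p n 1) \<longlonglongrightarrow> y" if "0 < y" for y
    using ratio[OF that] by (simp add: p_def)
  show ?thesis
    unfolding p_def[symmetric] c_def[symmetric]
  proof (rule order_tendstoI)
    fix a assume a: "a < max 0 (min x 1)"
    show "\<forall>\<^sub>F n in sequentially. a < c n"
    proof (cases "x \<le> 0")
      case True
      then show ?thesis using a by (auto simp: c_def p_def intro!: always_eventually less_le_trans[of a 0])
    next
      case False
      define b where "b = min x 1"
      define \<delta> where "\<delta> = (b - a) / 2"
      have b: "0 < b" "b \<le> 1" "b \<le> x" and \<delta>: "0 < \<delta>" "a < b - \<delta>"
        using False a by (auto simp: b_def \<delta>_def field_simps)
      have "(\<lambda>n. p n b / p n 1 - p n \<delta> / p n 1) \<longlonglongrightarrow> b - \<delta>"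
        by (intro tendsto_diff ratio' b \<delta>)
      from order_tendstoD(1)[OF this \<delta>(2)] p_pos
      show ?thesis by eventually_elim (use lower[OF _ b \<delta>(1)] in force)
    qed
  next
    fix a assume a: "max 0 (min x 1) < a"
    show "\<forall>\<^sub>F n in sequentially. c n < a"
    proof (cases "1 \<le> x")
      case True
      have c_le_1: "c n \<le> 1" if "0 < p n 1" for n
      proof -
        have "measure M {\<omega> \<in> space M. v n 1 < Z n \<omega> \<and> \<bar>uinv (v n) (Z n \<omega>)\<bar> \<le> x} \<le> p n 1"
          unfolding p_def by (intro finite_measure_mono) auto
        then show ?thesis using that by (simp add: c_def)
      qed
      have "1 < a" using True a by simp
      from p_pos show ?thesis by eventually_elim (use c_le_1 \<open>1 < a\<close> in force)
    next
      case False
      define b where "b = max 0 x"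
      define \<delta> where "\<delta> = (a - b) / 3"
      have x': "0 < b + \<delta>" "x < b + \<delta>" and \<delta>: "0 < \<delta>" "b + \<delta> + \<delta> < a"
        using False a by (auto simp: b_def \<delta>_def field_simps)
      have "(\<lambda>n. p n (b + \<delta>) / p n 1 + p n \<delta> / p n 1) \<longlonglongrightarrow> b + \<delta> + \<delta>"
        by (intro tendsto_add ratio' x' \<delta>)
      from order_tendstoD(2)[OF this \<delta>(2)] p_pos
      show ?thesis by eventually_elim (use upper[OF _ x' \<delta>(1)] in force)
    qed
  qed
qed

lemma real_distribution_uniform_unit_interval:
  "real_distribution (uniform_measure lborel {0..1::real})"
  by (auto simp: real_distribution_def real_distribution_axioms_def intro!: prob_space_uniform_measure)

lemma cdf_uniform_unit_interval:
  "cdf (uniform_measure lborel {0..1::real}) x = max 0 (min x 1)"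
proof -
  have "cdf (uniform_measure lborel {0..1::real}) x = measure lborel ({0..1} \<inter> {..x})"
    by (simp add: cdf_def2)
  also have "{0..1} \<inter> {..x} = (if x < 0 then {} else {0..min x 1::real})" by auto
  finally show ?thesis by simp
qed

lemma weak_conv_m_imp_conv_in_law:
  assumes "\<forall>\<^sub>F n in sequentially. real_distribution (\<mu> n)" and \<nu>: "real_distribution \<nu>"
    and "weak_conv_m \<mu> \<nu>"
  shows "conv_in_law \<mu> \<nu>"
  unfolding conv_in_law_def
proof (intro allI impI)
  fix f :: "real \<Rightarrow> real" assume f: "continuous_on UNIV f \<and> bounded (range f)"
  then obtain B where B: "\<And>x. norm (f x) \<le> B" by (auto simp: bounded_iff)
  define \<mu>' where "\<mu>' n = (if real_distribution (\<mu> n) then \<mu> n else \<nu>)" for n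
  have \<mu>'_eq: "\<forall>\<^sub>F n in sequentially. \<mu>' n = \<mu> n"
    using assms(1) by eventually_elim (simp add: \<mu>'_def)
  have "weak_conv_m \<mu>' \<nu>"
    unfolding weak_conv_m_def weak_conv_def
  proof (intro allI impI)
    fix x assume "isCont (cdf \<nu>) x"
    then have "(\<lambda>n. cdf (\<mu> n) x) \<longlonglongrightarrow> cdf \<nu> x"
      using \<open>weak_conv_m \<mu> \<nu>\<close> by (simp add: weak_conv_m_def weak_conv_def)
    then show "(\<lambda>n. cdf (\<mu>' n) x) \<longlonglongrightarrow> cdf \<nu> x"
      by (rule Lim_transform_eventually) (use \<mu>'_eq in \<open>auto elim: eventually_mono\<close>)
  qed
  moreover have "real_distribution (\<mu>' n)" for n using \<nu> by (simp add: \<mu>'_def)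
  ultimately have "(\<lambda>n. \<integral>x. f x \<partial>\<mu>' n) \<longlonglongrightarrow> (\<integral>x. f x \<partial>\<nu>)"
    using f B \<nu> weak_conv_imp_integral_bdd_continuous_conv
    by (metis continuous_on_eq_continuous_at open_UNIV UNIV_I)
  then show "(\<lambda>n. \<integral>x. f x \<partial>\<mu> n) \<longlonglongrightarrow> (\<integral>x. f x \<partial>\<nu>)"
    by (rule Lim_transform_eventually) (use \<mu>'_eq in \<open>auto elim: eventually_mono\<close>)
qed

lemma conv_in_law_conditional_uinv:
  fixes Z :: "nat \<Rightarrow> 'a \<Rightarrow> real" and v :: "nat \<Rightarrow> real \<Rightarrow> real"
  assumes M: "prob_space M" and Z: "\<And>n. Z n \<in> borel_measurable M"
    and anti: "\<And>n t1 t2. 0 < t1 \<Longrightarrow> t1 \<le> t2 \<Longrightarrow> v n t2 \<le> v n t1"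
    and left_cont: "\<And>n \<tau>. 0 < \<tau> \<Longrightarrow> continuous (at_left \<tau>) (v n)"
    and ratio: "\<And>y. 0 < y \<Longrightarrow> (\<lambda>n. measure M {\<omega> \<in> space M. v n y < Z n \<omega>}
                                   / measure M {\<omega> \<in> space M. v n 1 < Z n \<omega>}) \<longlonglongrightarrow> y"
  shows "conv_in_law
           (\<lambda>n. distr (uniform_measure M {\<omega> \<in> space M. v n 1 < Z n \<omega>}) borel (\<lambda>\<omega>. \<bar>uinv (v n) (Z n \<omega>)\<bar>))
           (uniform_measure lborel {0..1})"
proof -
  interpret prob_space M by fact
  note [measurable] = Z borel_measurable_uinv[OF anti]
  define E where "E n = {\<omega> \<in> space M. v n 1 < Z n \<omega>}" for n
  define \<mu> where "\<mu> n = distr (uniform_measure M (E n)) borel (\<lambda>\<omega>. \<bar>uinv (v n) (Z n \<omega>)\<bar>)" for n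
  have E_sets [measurable]: "E n \<in> sets M" for n unfolding E_def by measurable
  have E_pos: "\<forall>\<^sub>F n in sequentially. 0 < measure M (E n)"
    using tendsto_divide_self_imp_eventually_nonzero[OF ratio[OF zero_less_one]]
    by eventually_elim (simp add: E_def less_le)
  have "\<forall>\<^sub>F n in sequentially. real_distribution (\<mu> n)"
    using E_pos
  proof eventually_elim
    case (elim n)
    then have "prob_space (uniform_measure M (E n))"
      by (intro prob_space_uniform_measure) (simp_all add: emeasure_eq_measure)
    then show "real_distribution (\<mu> n)"
      by (simp add: \<mu>_def real_distribution_def real_distribution_axioms_def prob_space.prob_space_distr)
  qed
  moreover have "weak_conv_m \<mu> (uniform_measure lborel {0..1})"
    unfolding weak_conv_m_def weak_conv_def cdf_uniform_unit_interval
  proof (intro allI impI)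
    fix x :: real
    show "(\<lambda>n. cdf (\<mu> n) x) \<longlonglongrightarrow> max 0 (min x 1)"
      using tendsto_measure_uinv_le[OF M Z anti left_cont ratio]
    proof (rule Lim_transform_eventually)
      show "\<forall>\<^sub>F n in sequentially. measure M {\<omega> \<in> space M. v n 1 < Z n \<omega> \<and> \<bar>uinv (v n) (Z n \<omega>)\<bar> \<le> x}
                / measure M {\<omega> \<in> space M. v n 1 < Z n \<omega>} = cdf (\<mu> n) x"
        using E_pos
      proof eventually_elim
        case (elim n)
        have "cdf (\<mu> n) x = measure (uniform_measure M (E n)) {\<omega> \<in> space M. \<bar>uinv (v n) (Z n \<omega>)\<bar> \<le> x}"
          unfolding cdf_def2 \<mu>_def by (subst measure_distr) (auto intro!: arg_cong2[where f=measure])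
        also have "\<dots> = measure M (E n \<inter> {\<omega> \<in> space M. \<bar>uinv (v n) (Z n \<omega>)\<bar> \<le> x}) / measure M (E n)"
          using elim by (subst measure_uniform_measure) (simp_all add: emeasure_eq_measure)
        also have "E n \<inter> {\<omega> \<in> space M. \<bar>uinv (v n) (Z n \<omega>)\<bar> \<le> x}
            = {\<omega> \<in> space M. v n 1 < Z n \<omega> \<and> \<bar>uinv (v n) (Z n \<omega>)\<bar> \<le> x}"
          by (auto simp: E_def)
        finally show ?case by (simp add: E_def)
      qed
    qed
  qed
  ultimately show ?thesis
    unfolding \<mu>_def[abs_def] E_def
    by (rule weak_conv_m_imp_conv_in_law[OF _ real_distribution_uniform_unit_interval])
qed

lemma real_distribution_eqI_cts_step:
  assumes "real_distribution L" "real_distribution L'"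
    and "\<And>a b. a < b \<Longrightarrow> (\<integral>x. cts_step a b x \<partial>L) = (\<integral>x. cts_step a b x \<partial>L')"
  shows "L = L'"
proof -
  have cdf_le: "cdf A x \<le> cdf B x"
    if "real_distribution A" "real_distribution B"
      and "\<And>a b. a < b \<Longrightarrow> (\<integral>x. cts_step a b x \<partial>A) = (\<integral>x. cts_step a b x \<partial>B)" for A B x
  proof (rule tendsto_lowerbound)
    show "(cdf B \<longlongrightarrow> cdf B x) (at_right x)"
      using finite_borel_measure.cdf_is_right_cont[OF real_distribution.finite_borel_measure_M[OF that(2)]]
      by (simp add: continuous_within)
    show "\<forall>\<^sub>F y in at_right x. cdf A x \<le> cdf B y"
      using eventually_at_right_less[of x]
    proof eventually_elim
      case (elim y)
      have "cdf A x \<le> (\<integral>t. cts_step x y t \<partial>A)" using real_distribution.cdf_cts_step(1)[OF that(1) elim] .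
      also have "\<dots> = (\<integral>t. cts_step x y t \<partial>B)" using that(3)[OF elim] .
      also have "\<dots> \<le> cdf B y" using real_distribution.cdf_cts_step(2)[OF that(2) elim] .
      finally show ?case .
    qed
  qed simp
  have "cdf L = cdf L'"
    using cdf_le[of L L'] cdf_le[of L' L] assms by (intro ext antisym) auto
  then show ?thesis using assms cdf_unique by blast
qed

lemma conv_in_law_unique:
  assumes "conv_in_law \<mu> L" "conv_in_law \<mu> L'" "real_distribution L" "real_distribution L'"
  shows "L = L'"
proof (rule real_distribution_eqI_cts_step[OF assms(3,4)])
  fix a b :: real assume "a < b"
  then have "continuous_on UNIV (cts_step a b)" "bounded (range (cts_step a b))"
    using uniformly_continuous_imp_continuous[OF cts_step_uniformly_continuous]
    by (auto simp: bounded_real cts_step_def field_simps)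
  then show "(\<integral>x. cts_step a b x \<partial>L) = (\<integral>x. cts_step a b x \<partial>L')"
    using assms(1,2) unfolding conv_in_law_def by (blast intro: LIMSEQ_unique)
qed

lemma conv_in_law_distr:
  fixes \<phi> :: "'a::topological_space \<Rightarrow> 'b::topological_space"
  assumes "conv_in_law \<mu> \<nu>" and \<phi>: "continuous_on UNIV \<phi>"
    and sets: "\<And>n. sets (\<mu> n) = sets borel" "sets \<nu> = sets borel"
  shows "conv_in_law (\<lambda>n. distr (\<mu> n) borel \<phi>) (distr \<nu> borel \<phi>)"
  unfolding conv_in_law_def
proof (intro allI impI)
  fix f :: "'b \<Rightarrow> real" assume f: "continuous_on UNIV f \<and> bounded (range f)"
  have [measurable]: "\<phi> \<in> borel_measurable borel" "f \<in> borel_measurable borel"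
    using \<phi> f by (auto intro: borel_measurable_continuous_onI)
  have "continuous_on UNIV (\<lambda>x. f (\<phi> x))"
    using continuous_on_compose2[of UNIV f UNIV \<phi>] f \<phi> by auto
  moreover have "bounded (range (\<lambda>x. f (\<phi> x)))"
    using f by (rule bounded_subset[OF conjunct2]) auto
  ultimately have "(\<lambda>n. \<integral>x. f (\<phi> x) \<partial>\<mu> n) \<longlonglongrightarrow> (\<integral>x. f (\<phi> x) \<partial>\<nu>)"
    using assms(1) unfolding conv_in_law_def by blast
  then show "(\<lambda>n. \<integral>x. f x \<partial>distr (\<mu> n) borel \<phi>) \<longlonglongrightarrow> (\<integral>x. f x \<partial>distr \<nu> borel \<phi>)"
    by (simp add: integral_distr measurable_cong_sets[OF sets(1) refl] measurable_cong_sets[OF sets(2) refl])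
qed

lemma conv_in_law_distr_AE:
  fixes \<phi> :: "'b::topological_space \<Rightarrow> 'c::topological_space"
  assumes conv: "conv_in_law (\<lambda>n. distr (P n) borel (F n)) (distr Q borel G)"
    and \<phi>: "continuous_on UNIV \<phi>"
    and [measurable]: "\<And>n. F n \<in> borel_measurable (P n)" "\<And>n. H n \<in> borel_measurable (P n)"
      "G \<in> borel_measurable Q" "K \<in> borel_measurable Q"
    and AE_H: "\<And>n. AE x in P n. H n x = \<phi> (F n x)" and AE_K: "AE x in Q. K x = \<phi> (G x)"
  shows "conv_in_law (\<lambda>n. distr (P n) borel (H n)) (distr Q borel K)"
proof -
  have [measurable]: "\<phi> \<in> borel_measurable borel"
    using \<phi> by (rule borel_measurable_continuous_onI)
  have "distr (P n) borel (H n) = distr (distr (P n) borel (F n)) borel \<phi>" for n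
    using AE_H[of n] by (subst distr_distr) (auto intro!: distr_cong_AE simp: comp_def)
  moreover have "distr Q borel K = distr (distr Q borel G) borel \<phi>"
    using AE_K by (subst distr_distr) (auto intro!: distr_cong_AE simp: comp_def)
  ultimately show ?thesis
    using conv_in_law_distr[OF conv \<phi>] by simp
qed

lemma stationary_distr_eq:
  fixes X :: "nat \<Rightarrow> 'a \<Rightarrow> real^'d"
  assumes "stationary M X" and [measurable]: "\<And>m. X m \<in> borel_measurable M"
  shows "distr M borel (X k) = distr M borel (X 0)"
proof -
  let ?Q = "Pi\<^sub>M UNIV (\<lambda>_::nat. borel :: (real^'d) measure)"
  have [measurable]: "(\<lambda>\<omega> i. X (i + k) \<omega>) \<in> measurable M ?Q" "(\<lambda>\<omega> i. X i \<omega>) \<in> measurable M ?Q"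
    by (auto intro!: measurable_PiM_single')
  have "distr M borel (X k) = distr (distr M ?Q (\<lambda>\<omega> i. X (i + k) \<omega>)) borel (\<lambda>g. g 0)"
    by (simp add: distr_distr comp_def)
  also have "\<dots> = distr (distr M ?Q (\<lambda>\<omega> i. X i \<omega>)) borel (\<lambda>g. g 0)"
    using assms(1) by (simp add: stationary_def)
  also have "\<dots> = distr M borel (X 0)"
    by (simp add: distr_distr comp_def)
  finally show ?thesis .
qed

lemma tendsto_stationary_exceedance_ratio:
  fixes X :: "nat \<Rightarrow> 'a \<Rightarrow> real^'d"
  assumes stat: "stationary M X" and X: "\<And>m. X m \<in> borel_measurable M"
    and tail: "\<And>\<tau>. 0 < \<tau> \<Longrightarrow>
      (\<lambda>n. real n * measure M {\<omega> \<in> space M. norm (X 0 \<omega>) > u n \<tau>}) \<longlonglongrightarrow> \<tau>"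
    and "0 < y"
  shows "(\<lambda>n. measure M {\<omega> \<in> space M. u n y < norm (X (r n) \<omega>)}
            / measure M {\<omega> \<in> space M. u n 1 < norm (X (r n) \<omega>)}) \<longlonglongrightarrow> y"
proof -
  have tail_shift:
    "measure M {\<omega> \<in> space M. c < norm (X (r n) \<omega>)} = measure M {\<omega> \<in> space M. c < norm (X 0 \<omega>)}" for n c
  proof -
    have "measure (distr M borel (X (r n))) {x. c < norm x} = measure (distr M borel (X 0)) {x. c < norm x}"
      unfolding stationary_distr_eq[OF stat X, of "r n"] ..
    then show ?thesis using X by (simp add: measure_distr vimage_def Int_def conj_commute)
  qed
  have "(\<lambda>n. (real n * measure M {\<omega> \<in> space M. u n y < norm (X 0 \<omega>)})
           / (real n * measure M {\<omega> \<in> space M. u n 1 < norm (X 0 \<omega>)})) \<longlonglongrightarrow> y / 1"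
    using \<open>0 < y\<close> by (intro tendsto_divide tail) auto
  moreover have "\<forall>\<^sub>F n in sequentially. real n * a n / (real n * b n) = a n / b n" for a b :: "nat \<Rightarrow> real"
    using eventually_gt_at_top[of "0::nat"] by eventually_elim simp
  ultimately show ?thesis unfolding tail_shift div_by_1
    by (rule Lim_transform_eventually)
qed

theorem lemma3p3:
  fixes M :: "'b measure" and X :: "nat \<Rightarrow> 'b \<Rightarrow> real^'d"
    and u :: "nat \<Rightarrow> real \<Rightarrow> real" and r :: "nat \<Rightarrow> nat"
    and N :: "'c measure" and Y :: "int \<Rightarrow> 'c \<Rightarrow> real^'d"
  assumes M: "prob_space M"
    and X_meas: "\<And>m. X m \<in> borel_measurable M"
    and stat: "stationary M X"
    and u_pos: "\<And>n \<tau>. \<tau> > 0 \<Longrightarrow> u n \<tau> > 0"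
    and u_mono: "\<And>n \<tau>1 \<tau>2. 0 < \<tau>1 \<Longrightarrow> \<tau>1 \<le> \<tau>2 \<Longrightarrow> u n \<tau>2 \<le> u n \<tau>1"
    and u_leftcont: "\<And>n \<tau>. \<tau> > 0 \<Longrightarrow> continuous (at_left \<tau>) (u n)"
    and u_range: "\<And>n. ((\<lambda>(\<tau>1, \<tau>2). measure M {\<omega> \<in> space M. u n \<tau>2 < norm (X 0 \<omega>) \<and> norm (X 0 \<omega>) < u n \<tau>1})
                        \<longlongrightarrow> 1) (at_right 0 \<times>\<^sub>F at_top)"
    and u_tail: "\<And>\<tau>. \<tau> > 0 \<Longrightarrow>
                   (\<lambda>n. real n * measure M {\<omega> \<in> space M. norm (X 0 \<omega>) > u n \<tau>}) \<longlonglongrightarrow> \<tau>"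
    and r_lim: "filterlim r at_top sequentially"
    and N: "prob_space N"
    and Y_meas: "\<And>j. Y j \<in> borel_measurable N"
    and conv: "\<And>s t \<tau>. s < t \<Longrightarrow> \<tau> > 0 \<Longrightarrow>
       conv_in_law
         (\<lambda>n. distr (uniform_measure M {\<omega> \<in> space M. norm (X (r n) \<omega>) > u n \<tau>}) borel
                 (\<lambda>\<omega> j. (1 / \<tau>) *\<^sub>R Xblock u X n (int (r n) + s) (int (r n) + t) \<omega> (int (r n) + j)))
         (distr N borel (\<lambda>\<omega> j. if s \<le> j \<and> j < t then Y j \<omega> else 0))"
  shows "distr N borel (\<lambda>\<omega>. norm (Y 0 \<omega>)) = uniform_measure lborel {0..1}"
proof -
  note [measurable] = X_meas Y_meas
  have [measurable]: "uinv (u n) \<in> borel_measurable borel" for n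
    by (rule borel_measurable_uinv) (rule u_mono)
  define \<mu> where "\<mu> n = distr (uniform_measure M {\<omega> \<in> space M. u n 1 < norm (X (r n) \<omega>)}) borel
                         (\<lambda>\<omega>. \<bar>uinv (u n) (norm (X (r n) \<omega>))\<bar>)" for n
  have "conv_in_law \<mu> (uniform_measure lborel {0..1})"
    unfolding \<mu>_def[abs_def]
    using M _ u_mono u_leftcont tendsto_stationary_exceedance_ratio[OF stat X_meas u_tail]
    by (rule conv_in_law_conditional_uinv[where Z="\<lambda>n \<omega>. norm (X (r n) \<omega>)"]) measurable
  moreover have "conv_in_law \<mu> (distr N borel (\<lambda>\<omega>. norm (Y 0 \<omega>)))"
    unfolding \<mu>_def[abs_def]
  proof (rule conv_in_law_distr_AE[OF conv[of 0 1 1], where \<phi>="\<lambda>g. norm (g 0)"])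
    show "AE \<omega> in uniform_measure M {\<omega> \<in> space M. u n 1 < norm (X (r n) \<omega>)}.
            \<bar>uinv (u n) (norm (X (r n) \<omega>))\<bar>
            = norm ((1 / 1) *\<^sub>R Xblock u X n (int (r n) + 0) (int (r n) + 1) \<omega> (int (r n) + 0))" for n
      using u_pos[of 1 n] by (intro AE_uniform_measureI AE_I2) (auto simp: Xblock_def tX_def)
  qed (auto intro!: measurable_coordinatewise_then_product continuous_intros
         simp: measurable_cong_sets[OF sets_uniform_measure refl] Xblock_def, unfold tX_def, measurable)
  moreover have "real_distribution (distr N borel (\<lambda>\<omega>. norm (Y 0 \<omega>)))"
    by (intro prob_space.real_distribution_distr[OF N]) measurable
  ultimately show ?thesis
    by (intro conv_in_law_unique[OF _ _ _ real_distribution_uniform_unit_interval])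
qed

end
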